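(* Consider the scalar system $\dot x=u+ax^2$, where $x,u\in\mathbb{R}$ and $a$ is an unknown constant. Let $\lambda>0$, $k>0$, $\gamma_a>0$, $\mu(t)=e^{\lambda t}$ and $s=\mu(t)x$. Apply the controller $$u=-(k+\lambda)x-\hat a x^2,\qquad \dot{\hat a}=\gamma_a\,\mu\, s\, x^2.$$ Then, for all initial conditions $x(0)$ and $\hat a(0)$: 1. $V=\tfrac12 s^2+\tfrac1{2\gamma_a}(a-\hat a)^2$ satisfies $\dot V=-ks^2$. 2. $s$, $\hat a$, $x$ and $u$ are bounded, and $|x(t)|\le C e^{-\lambda t}$ for some constant $C$ depending on the initial conditions. 3. $\lim_{t\to\infty}\hat a(t)$ exists. *)

theory Defs
  imports Complex_Main
begin

definition mu :: "real \<Rightarrow> real \<Rightarrow> real" where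
  "mu lam t = exp (lam * t)"

definition ctrl :: "real \<Rightarrow> real \<Rightarrow> real \<Rightarrow> real \<Rightarrow> real" where
  "ctrl k lam xv ahv = - (k + lam) * xv - ahv * xv ^ 2"

definition closed_loop_solution ::
  "real \<Rightarrow> real \<Rightarrow> real \<Rightarrow> real \<Rightarrow> (real \<Rightarrow> real) \<Rightarrow> (real \<Rightarrow> real) \<Rightarrow> bool" where
  "closed_loop_solution a lam k gam x ah \<longleftrightarrow>
     (\<forall>t\<ge>0. (x has_real_derivative (ctrl k lam (x t) (ah t) + a * (x t)^2)) (at t within {0..})) \<and>
     (\<forall>t\<ge>0. (ah has_real_derivative
                 (gam * mu lam t * (mu lam t * x t) * (x t)^2)) (at t within {0..}))"

end

theory Submission
  imports Defs
begin

text \<open>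
  Along closed-loop solutions the Lyapunov function V = s^2/2 + (a - ah)^2/(2 gam) of the
  scaled state s = exp(lam t) x and the estimation error has derivative -k s^2, because the
  adaptation law exactly cancels the cross term (a - ah) mu s x^2. Hence V never exceeds its
  initial value, which bounds s and ah, and therefore x = exp(-lam t) s and u. Finally the
  adaptation rate gam mu^2 x^3 = gam s^3 exp(-lam t) is bounded by an integrable exponential,
  so ah plus the tail of that integral is nonincreasing and bounded below, and ah converges.
\<close>

lemma deriv_nonpos_imp_antitone_nonneg:
  fixes f f' :: "real \<Rightarrow> real"
  assumes deriv: "\<And>t. t \<ge> 0 \<Longrightarrow> (f has_real_derivative f' t) (at t within {0..})"
    and nonpos: "\<And>t. t \<ge> 0 \<Longrightarrow> f' t \<le> 0"
    and "0 \<le> t1" "t1 \<le> t2"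
  shows "f t2 \<le> f t1"
proof (rule DERIV_nonpos_imp_decreasing_open[OF \<open>t1 \<le> t2\<close>])
  fix y assume y: "t1 < y" "y < t2"
  then have "y \<in> {0<..}"
    using \<open>0 \<le> t1\<close> by simp
  have "(f has_real_derivative f' y) (at y within {0<..})"
    using deriv[of y] y \<open>0 \<le> t1\<close> by (auto intro: has_field_derivative_subset)
  then have "DERIV f y :> f' y"
    by (simp only: at_within_open[OF \<open>y \<in> {0<..}\<close> open_greaterThan])
  then show "\<exists>z. DERIV f y :> z \<and> z \<le> 0"
    using nonpos[of y] y \<open>0 \<le> t1\<close> by auto
next
  have "continuous_on {0..} f"
    using deriv by (metis DERIV_continuous atLeast_iff continuous_on_eq_continuous_within)
  then show "continuous_on {t1..t2} f"
    by (rule continuous_on_subset) (use \<open>0 \<le> t1\<close> in auto)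
qed

lemma antitone_bdd_below_tendsto_Inf:
  fixes f :: "real \<Rightarrow> real"
  assumes antitone: "\<And>s t. 0 \<le> s \<Longrightarrow> s \<le> t \<Longrightarrow> f t \<le> f s"
    and bdd: "\<And>t. 0 \<le> t \<Longrightarrow> m \<le> f t"
  shows "(f \<longlongrightarrow> Inf (f ` {0..})) at_top"
proof (rule decreasing_tendsto)
  have "bdd_below (f ` {0..})"
    using bdd by (intro bdd_belowI[of _ m]) auto
  then show "\<forall>\<^sub>F t in at_top. Inf (f ` {0..}) \<le> f t"
    by (intro eventually_mono[OF eventually_ge_at_top[of 0]]) (auto intro: cInf_lower)
next
  fix y assume "Inf (f ` {0..}) < y"
  then obtain t0 where "t0 \<ge> 0" "f t0 < y"
    using cInf_lessD[of "f ` {0..}"] by auto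
  then show "\<forall>\<^sub>F t in at_top. f t < y"
    by (intro eventually_mono[OF eventually_ge_at_top[of t0]]) (use antitone in force)
qed

lemma tendsto_exp_neg_at_top:
  fixes lam :: real
  assumes "lam > 0"
  shows "((\<lambda>t. exp (- lam * t)) \<longlongrightarrow> 0) at_top"
proof -
  have "filterlim (\<lambda>t. - lam * t) at_bot at_top"
    using assms by (intro filterlim_tendsto_neg_mult_at_bot[OF tendsto_const])
      (auto simp: filterlim_ident)
  then show ?thesis
    by (rule filterlim_compose[OF exp_at_bot])
qed

lemma convergent_if_deriv_le_exp_decay:
  fixes f f' :: "real \<Rightarrow> real"
  assumes "lam > 0"
    and deriv: "\<And>t. t \<ge> 0 \<Longrightarrow> (f has_real_derivative f' t) (at t within {0..})"
    and rate: "\<And>t. t \<ge> 0 \<Longrightarrow> f' t \<le> M * exp (- lam * t)"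
    and bdd: "\<And>t. t \<ge> 0 \<Longrightarrow> m \<le> f t"
  shows "\<exists>L. (f \<longlongrightarrow> L) at_top"
proof -
  \<comment> \<open>Adding the tail (M/lam) exp(-lam t) of the integral of the bound makes f nonincreasing.\<close>
  define g where "g t = f t + M / lam * exp (- lam * t)" for t
  have "(g has_real_derivative f' t - M * exp (- lam * t)) (at t within {0..})"
    if "t \<ge> 0" for t
    unfolding g_def[abs_def]
    by (rule derivative_eq_intros deriv[OF that] refl | use \<open>lam > 0\<close> in simp)+
  then have antitone: "g t \<le> g s" if "0 \<le> s" "s \<le> t" for s t
    by (rule deriv_nonpos_imp_antitone_nonneg[OF _ _ that]) (use rate in auto)
  have lower: "m - \<bar>M / lam\<bar> \<le> g t" if "t \<ge> 0" for t
  proof -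
    have "exp (- lam * t) \<le> 1"
      using \<open>lam > 0\<close> that by simp
    then have "\<bar>M / lam * exp (- lam * t)\<bar> \<le> \<bar>M / lam\<bar>"
      unfolding abs_mult by (intro mult_left_le) auto
    then show ?thesis
      unfolding g_def using bdd[OF that] by linarith
  qed
  have "(g \<longlongrightarrow> Inf (g ` {0..})) at_top"
    using antitone lower by (rule antitone_bdd_below_tendsto_Inf)
  then have "((\<lambda>t. g t - M / lam * exp (- lam * t)) \<longlongrightarrow> Inf (g ` {0..}) - M / lam * 0) at_top"
    by (intro tendsto_intros tendsto_exp_neg_at_top \<open>lam > 0\<close>)
  then show ?thesis
    unfolding g_def by auto
qed

lemma abs_le_exp_decay_if_scaled_bounded:
  assumes "\<bar>mu lam t * xv\<bar> \<le> S"
  shows "\<bar>xv\<bar> \<le> S * exp (- lam * t)"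
proof -
  have "\<bar>xv\<bar> = \<bar>mu lam t * xv\<bar> * exp (- lam * t)"
    unfolding mu_def by (simp add: abs_mult exp_minus)
  then show ?thesis
    using assms by (simp add: mult_right_mono)
qed

lemma abs_ctrl_le:
  assumes "k + lam \<ge> 0" and "\<bar>xv\<bar> \<le> B" and "\<bar>ahv\<bar> \<le> A"
  shows "\<bar>ctrl k lam xv ahv\<bar> \<le> (k + lam) * B + A * B^2"
proof -
  have "\<bar>ctrl k lam xv ahv\<bar> \<le> \<bar>(k + lam) * xv\<bar> + \<bar>ahv * xv^2\<bar>"
    unfolding ctrl_def by (metis abs_triangle_ineq4 abs_minus_cancel minus_mult_left)
  also have "\<dots> = (k + lam) * \<bar>xv\<bar> + \<bar>ahv\<bar> * xv^2"
    using assms(1) by (simp add: abs_mult)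
  also have "\<dots> \<le> (k + lam) * B + A * B^2"
  proof (rule add_mono)
    show "(k + lam) * \<bar>xv\<bar> \<le> (k + lam) * B"
      using assms by (simp add: mult_left_mono)
    have "xv^2 \<le> B^2"
      using assms(2) abs_le_square_iff by fastforce
    then show "\<bar>ahv\<bar> * xv^2 \<le> A * B^2"
      using assms(3) by (simp add: mult_mono)
  qed
  finally show ?thesis .
qed

lemma adaptation_rate_le:
  assumes "gam \<ge> 0" and "\<bar>mu lam t * xv\<bar> \<le> S"
  shows "gam * mu lam t * (mu lam t * xv) * xv^2 \<le> gam * S^3 * exp (- lam * t)"
proof -
  have "(mu lam t * xv)^3 \<le> S^3"
    using assms(2) by (metis abs_ge_self abs_ge_zero order_trans power_abs power_mono)
  have "gam * mu lam t * (mu lam t * xv) * xv^2 = gam * (mu lam t * xv)^3 * exp (- lam * t)"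
    unfolding mu_def by (simp add: exp_minus field_simps power3_eq_cube power2_eq_square)
  also have "\<dots> \<le> gam * S^3 * exp (- lam * t)"
    using \<open>(mu lam t * xv)^3 \<le> S^3\<close> assms(1) by (intro mult_right_mono mult_left_mono) auto
  finally show ?thesis .
qed

definition lyapunov ::
  "real \<Rightarrow> real \<Rightarrow> real \<Rightarrow> (real \<Rightarrow> real) \<Rightarrow> (real \<Rightarrow> real) \<Rightarrow> real \<Rightarrow> real" where
  "lyapunov a lam gam x ah t = (1/2) * (mu lam t * x t)^2 + (1 / (2 * gam)) * (a - ah t)^2"

lemma closed_loop_lyapunov_deriv:
  assumes sol: "closed_loop_solution a lam k gam x ah" and "gam \<noteq> 0" and "t \<ge> 0"
  shows "(lyapunov a lam gam x ah has_real_derivative - k * (mu lam t * x t)^2) (at t within {0..})"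
proof -
  have "(x has_real_derivative ctrl k lam (x t) (ah t) + a * (x t)^2) (at t within {0..})"
    and "(ah has_real_derivative gam * mu lam t * (mu lam t * x t) * (x t)^2) (at t within {0..})"
    using sol \<open>t \<ge> 0\<close> unfolding closed_loop_solution_def by auto
  then show ?thesis
    unfolding lyapunov_def[abs_def] mu_def
    by (auto intro!: derivative_eq_intros simp: ctrl_def field_simps power2_eq_square \<open>gam \<noteq> 0\<close>)
qed

lemma closed_loop_lyapunov_le_initial:
  assumes "closed_loop_solution a lam k gam x ah" and "k \<ge> 0" and "gam \<noteq> 0" and "t \<ge> 0"
  shows "lyapunov a lam gam x ah t \<le> lyapunov a lam gam x ah 0"
  by (rule deriv_nonpos_imp_antitone_nonneg[OF closed_loop_lyapunov_deriv[OF assms(1,3)]])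
    (use assms(2,4) in auto)

lemma closed_loop_scaled_state_bounded:
  assumes "closed_loop_solution a lam k gam x ah" and "k \<ge> 0" and "gam > 0" and "t \<ge> 0"
  shows "\<bar>mu lam t * x t\<bar> \<le> sqrt (2 * lyapunov a lam gam x ah 0)"
proof -
  have "0 \<le> (1 / (2 * gam)) * (a - ah t)^2"
    using \<open>gam > 0\<close> by simp
  then have "(mu lam t * x t)^2 \<le> 2 * lyapunov a lam gam x ah 0"
    using closed_loop_lyapunov_le_initial[of a lam k gam x ah t] assms
    unfolding lyapunov_def[of _ _ _ _ _ t] by linarith
  then show ?thesis
    using real_sqrt_le_mono by fastforce
qed

lemma closed_loop_estimation_error_bounded:
  assumes "closed_loop_solution a lam k gam x ah" and "k \<ge> 0" and "gam > 0" and "t \<ge> 0"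
  shows "\<bar>a - ah t\<bar> \<le> sqrt (2 * gam * lyapunov a lam gam x ah 0)"
proof -
  have "0 \<le> (1/2) * (mu lam t * x t)^2"
    by simp
  then have "(1 / (2 * gam)) * (a - ah t)^2 \<le> lyapunov a lam gam x ah 0"
    using closed_loop_lyapunov_le_initial[of a lam k gam x ah t] assms
    unfolding lyapunov_def[of _ _ _ _ _ t] by linarith
  then have "(a - ah t)^2 \<le> 2 * gam * lyapunov a lam gam x ah 0"
    using \<open>gam > 0\<close> by (simp add: field_simps)
  then show ?thesis
    using real_sqrt_le_mono by fastforce
qed

lemma closed_loop_estimate_convergent:
  assumes sol: "closed_loop_solution a lam k gam x ah" and "lam > 0" and "k \<ge> 0" and "gam > 0"
  shows "\<exists>L. (ah \<longlongrightarrow> L) at_top"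
proof -
  define S where "S = sqrt (2 * lyapunov a lam gam x ah 0)"
  have ah_deriv: "(ah has_real_derivative gam * mu lam t * (mu lam t * x t) * (x t)^2)
      (at t within {0..})" if "t \<ge> 0" for t
    using sol that unfolding closed_loop_solution_def by blast
  have ah_rate: "gam * mu lam t * (mu lam t * x t) * (x t)^2 \<le> gam * S^3 * exp (- lam * t)"
    if "t \<ge> 0" for t
    using adaptation_rate_le closed_loop_scaled_state_bounded[OF sol _ _ that] assms
    unfolding S_def by simp
  have ah_lower: "a - sqrt (2 * gam * lyapunov a lam gam x ah 0) \<le> ah t" if "t \<ge> 0" for t
    using closed_loop_estimation_error_bounded[OF sol _ _ that] assms by linarith
  show ?thesis
    using \<open>lam > 0\<close> ah_deriv ah_rate ah_lower by (rule convergent_if_deriv_le_exp_decay)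
qed

theorem mainTheorem3:
  fixes a lam k gam :: real and x ah :: "real \<Rightarrow> real"
  assumes "lam > 0" and "k > 0" and "gam > 0"
    and "closed_loop_solution a lam k gam x ah"
  defines "s \<equiv> (\<lambda>t. mu lam t * x t)"
    and "u \<equiv> (\<lambda>t. ctrl k lam (x t) (ah t))"
    and "V \<equiv> (\<lambda>t. (1/2) * (mu lam t * x t)^2 + (1 / (2 * gam)) * (a - ah t)^2)"
  shows "(\<forall>t\<ge>0. (V has_real_derivative (- k * (s t)^2)) (at t within {0..}))
    \<and> (\<exists>B. \<forall>t\<ge>0. \<bar>s t\<bar> \<le> B)
    \<and> (\<exists>B. \<forall>t\<ge>0. \<bar>ah t\<bar> \<le> B)
    \<and> (\<exists>B. \<forall>t\<ge>0. \<bar>x t\<bar> \<le> B)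
    \<and> (\<exists>B. \<forall>t\<ge>0. \<bar>u t\<bar> \<le> B)
    \<and> (\<exists>C. \<forall>t\<ge>0. \<bar>x t\<bar> \<le> C * exp (- lam * t))
    \<and> (\<exists>L. (ah \<longlongrightarrow> L) at_top)"
proof -
  note sol = assms(4)
  define S where "S = sqrt (2 * lyapunov a lam gam x ah 0)"
  define A where "A = \<bar>a\<bar> + sqrt (2 * gam * lyapunov a lam gam x ah 0)"
  have V_deriv: "\<forall>t\<ge>0. (V has_real_derivative - k * (s t)^2) (at t within {0..})"
    unfolding V_def s_def using closed_loop_lyapunov_deriv[OF sol] assms(3)
    by (simp add: lyapunov_def[abs_def])
  have s_bound: "\<bar>s t\<bar> \<le> S" if "t \<ge> 0" for t
    unfolding s_def S_def using closed_loop_scaled_state_bounded[OF sol _ _ that] assms by simp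
  have ah_bound: "\<bar>ah t\<bar> \<le> A" if "t \<ge> 0" for t
    using closed_loop_estimation_error_bounded[OF sol _ _ that] assms unfolding A_def by simp
  have x_decay: "\<bar>x t\<bar> \<le> S * exp (- lam * t)" if "t \<ge> 0" for t
    using abs_le_exp_decay_if_scaled_bounded s_bound[OF that] unfolding s_def by blast
  have x_bound: "\<bar>x t\<bar> \<le> S" if "t \<ge> 0" for t
  proof -
    have "S * exp (- lam * t) \<le> S"
      using s_bound[OF that] \<open>lam > 0\<close> that by (intro mult_left_le) auto
    then show ?thesis
      using x_decay[OF that] by linarith
  qed
  have u_bound: "\<bar>u t\<bar> \<le> (k + lam) * S + A * S^2" if "t \<ge> 0" for t
    unfolding u_def using abs_ctrl_le x_bound[OF that] ah_bound[OF that] assms(1,2) by simp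
  have ah_converges: "\<exists>L. (ah \<longlongrightarrow> L) at_top"
    using closed_loop_estimate_convergent[OF sol] assms(1-3) by simp
  show ?thesis
    using V_deriv s_bound ah_bound x_bound u_bound x_decay ah_converges by blast
qed

end
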